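(* Let $A\subset\mathbb A$ be an essential thin annular continuum such that $C_A$ is compactly generated and $H_{\mathcal S_A}<\infty$. Then $A$ is compactly generated.
   Context: $\mathbb A=\mathbb S^1\times\mathbb R$, $\pi:\mathbb R^2\to\mathbb A$, $T(x,y)=(x+1,y)$. An essential annular continuum $A$ is a continuum with $\mathbb A\setminus A$ exactly two components $\mathcal U^+(A),\mathcal U^-(A)$, unbounded above resp. below; thin means empty interior; $C_A=\overline{\mathcal U^+(A)}\cap\overline{\mathcal U^-(A)}$; $\hat A=\pi^{-1}(A)$, $C_{\hat A}=\pi^{-1}(C_A)$. A closed $B\subset\mathbb A$ is compactly generated if there is compact connected $G_0\subset\pi^{-1}(B)$ with $\bigcup_nT^n(G_0)=\pi^{-1}(B)$. For $X\subset\mathbb R^2$, $h(X)=\sup\{x_1-x_2:(x_1,y_1),(x_2,y_2)\in X\}$. $\mathcal S_A$ is the set of connected components (spikes) of $\hat A\setminus C_{\hat A}$ and $H_{\mathcal S_A}=\sup\{h(S):S\in\mathcal S_A\}$. *)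

theory Defs
  imports "HOL-Analysis.Analysis"
begin

definition annulus :: "(complex \<times> real) set" where
  "annulus = {p. norm (fst p) = 1}"

definition proj :: "real \<times> real \<Rightarrow> complex \<times> real" where
  "proj p = (cis (2 * pi * fst p), snd p)"

definition Tpow :: "int \<Rightarrow> real \<times> real \<Rightarrow> real \<times> real" where
  "Tpow n p = (fst p + of_int n, snd p)"

definition lift :: "(complex \<times> real) set \<Rightarrow> (real \<times> real) set" where
  "lift B = proj -` B"

definition essential_annular_continuum :: "(complex \<times> real) set \<Rightarrow> bool" where
  "essential_annular_continuum A \<longleftrightarrow>
     A \<subseteq> annulus \<and> compact A \<and> connected A \<and> A \<noteq> {} \<and>
     (\<exists>U V. components (annulus - A) = {U, V} \<and> U \<noteq> V \<and>
            \<not> bdd_above (snd ` U) \<and> \<not> bdd_below (snd ` V))"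

definition Uplus :: "(complex \<times> real) set \<Rightarrow> (complex \<times> real) set" where
  "Uplus A = (THE U. U \<in> components (annulus - A) \<and> \<not> bdd_above (snd ` U))"

definition Uminus :: "(complex \<times> real) set \<Rightarrow> (complex \<times> real) set" where
  "Uminus A = (THE U. U \<in> components (annulus - A) \<and> \<not> bdd_below (snd ` U))"

definition thin :: "(complex \<times> real) set \<Rightarrow> bool" where
  "thin A \<longleftrightarrow> \<not> (\<exists>W. openin (top_of_set annulus) W \<and> W \<noteq> {} \<and> W \<subseteq> A)"

definition C_of :: "(complex \<times> real) set \<Rightarrow> (complex \<times> real) set" where
  "C_of A = closure (Uplus A) \<inter> closure (Uminus A)"

definition compactly_generated :: "(complex \<times> real) set \<Rightarrow> bool" where
  "compactly_generated B \<longleftrightarrow> B \<subseteq> annulus \<and> closed B \<and>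
     (\<exists>G0. compact G0 \<and> connected G0 \<and> G0 \<subseteq> lift B \<and>
           (\<Union>n::int. Tpow n ` G0) = lift B)"

definition hwidth :: "(real \<times> real) set \<Rightarrow> ereal" where
  "hwidth X = (SUP p\<in>X. SUP q\<in>X. ereal (fst p - fst q))"

definition spikes :: "(complex \<times> real) set \<Rightarrow> (real \<times> real) set set" where
  "spikes A = components (lift A - lift (C_of A))"

definition H_spikes :: "(complex \<times> real) set \<Rightarrow> ereal" where
  "H_spikes A = (SUP S\<in>spikes A. hwidth S)"

end

theory Submission
  imports Defs
begin

text \<open>
  Thinness makes \<open>C_A\<close> nonempty. The key point is that the closure of every spike meets
  the lift of \<open>C_A\<close>: otherwise the spike would be a closed component of
  \<open>lift A - lift C_A\<close>, bounded thanks to the width bound and the compactness of \<open>A\<close>;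
  by Sura-Bura it would then have a compact neighbourhood \<open>K\<close> that is open and closed in
  \<open>lift A - lift C_A\<close>, and \<open>proj K\<close> would be a nonempty clopen subset of the connected
  set \<open>A\<close> avoiding \<open>C_A\<close>. Hence some translate of every spike touches a compact connected
  generator \<open>G\<close> of \<open>lift C_A\<close>, and the closure of \<open>G\<close> together with all spikes touching
  it is connected, compact by the width bound, and its translates cover \<open>lift A\<close>.
\<close>

lemma Tpow_image_translation: "Tpow n ` S = (+) (of_int n, 0) ` S"
  by (rule image_cong) (simp_all add: Tpow_def plus_prod_def)

lemma Tpow_Tpow [simp]: "Tpow m (Tpow n p) = Tpow (m + n) p"
  by (simp add: Tpow_def)

lemma Tpow_0 [simp]: "Tpow 0 p = p"
  by (simp add: Tpow_def)

lemma snd_proj [simp]: "snd (proj p) = snd p"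
  by (simp add: proj_def)

lemma proj_Tpow [simp]: "proj (Tpow n p) = proj p"
proof -
  have "cis (2 * pi * fst p + 2 * pi * of_int n) = cis (2 * pi * fst p) * cis (2 * pi * of_int n)"
    by (simp only: cis_mult)
  also have "\<dots> = cis (2 * pi * fst p)" by simp
  finally show ?thesis by (simp add: proj_def Tpow_def distrib_left)
qed

lemma proj_eq_imp_Tpow:
  assumes "proj p = proj q"
  obtains n where "q = Tpow n p"
proof -
  have "cis (2 * pi * fst q) = cis (2 * pi * fst p)" using assms by (simp add: proj_def)
  then have "sin (2 * pi * fst q) = sin (2 * pi * fst p) \<and> cos (2 * pi * fst q) = cos (2 * pi * fst p)"
    by (simp add: complex_eq_iff)
  then obtain n :: int where "2 * pi * fst q = 2 * pi * fst p + 2 * pi * n"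
    using sin_cos_eq_iff by blast
  then have "2 * pi * fst q = 2 * pi * (fst p + n)" by (simp add: algebra_simps)
  then have "fst q = fst p + n" by simp
  moreover have "snd q = snd p" using assms by (simp add: proj_def)
  ultimately show thesis by (intro that[of n]) (simp add: Tpow_def prod_eq_iff)
qed

lemma proj_onto_annulus:
  assumes "z \<in> annulus"
  obtains p where "proj p = z" "fst p \<in> {-1..1}"
proof -
  obtain w y where z: "z = (w, y)" by (cases z)
  have w: "norm w = 1" using assms z by (simp add: annulus_def)
  then have "w \<noteq> 0" by auto
  with w have "cis (Arg w) = w" by (simp add: cis_Arg sgn_div_norm)
  moreover have "-pi < Arg w" "Arg w \<le> pi" using Arg_bounded by auto
  then have "Arg w / (2 * pi) \<in> {-1..1}" by (simp add: field_simps)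
  ultimately show thesis by (intro that[of "(Arg w / (2 * pi), y)"]) (simp_all add: proj_def z)
qed

lemma continuous_on_proj: "continuous_on S proj"
  unfolding proj_def by (intro continuous_intros)

lemma Tpow_lift [simp]: "Tpow n ` lift B = lift B"
proof
  show "Tpow n ` lift B \<subseteq> lift B" by (auto simp: lift_def)
  show "lift B \<subseteq> Tpow n ` lift B"
  proof
    fix p assume "p \<in> lift B"
    then have "Tpow (-n) p \<in> lift B" by (simp add: lift_def)
    moreover have "p = Tpow n (Tpow (-n) p)" by simp
    ultimately show "p \<in> Tpow n ` lift B" by (rule rev_image_eqI)
  qed
qed

lemma closed_lift: "closed B \<Longrightarrow> closed (lift B)"
  unfolding lift_def by (rule closed_vimage[OF _ continuous_on_proj])

lemma compact_snd_bound:
  fixes A :: "('a::real_normed_vector \<times> real) set"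
  assumes "compact A"
  obtains M where "\<And>a. a \<in> A \<Longrightarrow> \<bar>snd a\<bar> \<le> M"
proof -
  obtain M where "\<And>a. a \<in> A \<Longrightarrow> norm a \<le> M"
    using compact_imp_bounded[OF assms] by (auto simp: bounded_iff)
  then show thesis by (metis that norm_snd_le order_trans prod.collapse real_norm_def)
qed

lemma lift_snd_bound:
  assumes "compact A"
  obtains M where "\<And>p. p \<in> lift A \<Longrightarrow> \<bar>snd p\<bar> \<le> M"
  using compact_snd_bound[OF assms] by (metis lift_def snd_proj vimageD)

lemma compact_if_closed_lift:
  assumes "B \<subseteq> annulus" "bounded B" "closed (lift B)"
  shows "compact B"
proof -
  have "compact (closure B)" using assms(2) by (simp add: compact_closure)
  then obtain M where M: "\<And>b. b \<in> closure B \<Longrightarrow> \<bar>snd b\<bar> \<le> M"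
    using compact_snd_bound by blast
  have "B = proj ` (lift B \<inter> ({-1..1} \<times> {-M..M}))"
  proof
    show "B \<subseteq> proj ` (lift B \<inter> ({-1..1} \<times> {-M..M}))"
    proof
      fix b assume b: "b \<in> B"
      then obtain p where p: "proj p = b" "fst p \<in> {-1..1}"
        using assms(1) proj_onto_annulus by blast
      have "\<bar>snd b\<bar> \<le> M" using M b closure_subset by blast
      then have "snd p \<in> {-M..M}" using p(1) by (auto simp: abs_le_iff)
      moreover have "p \<in> lift B" using b p(1) by (simp add: lift_def)
      ultimately show "b \<in> proj ` (lift B \<inter> ({-1..1} \<times> {-M..M}))"
        using p by (intro rev_image_eqI[of p]) (simp_all add: mem_Times_iff)
    qed
  qed (auto simp: lift_def)
  moreover have "compact (lift B \<inter> ({-1..1} \<times> {-M..M}))"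
    using assms(3) by (intro closed_Int_compact compact_Times compact_Icc)
  ultimately show ?thesis by (metis compact_continuous_image continuous_on_proj)
qed

text \<open>
  The complement of \<open>proj ` K\<close> in \<open>A\<close> is closed because its lift is \<open>lift A\<close> minus all
  translates of the open set \<open>W\<close>.
\<close>
lemma proj_image_eq_if_openin_lift:
  assumes A: "connected A" "compact A" "A \<subseteq> annulus"
    and K: "compact K" "K \<noteq> {}" "K = lift A \<inter> W" "open W"
  shows "proj ` K = A"
proof -
  let ?O = "\<Union>n. Tpow n ` W"
  have lift_rest: "lift (A - proj ` K) = lift A - ?O"
  proof (intro equalityI subsetI)
    fix p assume p: "p \<in> lift (A - proj ` K)"
    have "p \<notin> Tpow n ` W" for n
    proof
      assume "p \<in> Tpow n ` W"
      then obtain q where q: "q \<in> W" "p = Tpow n q" by blast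
      then have "q \<in> K" using p K(3) by (auto simp: lift_def)
      then show False using p q by (auto simp: lift_def)
    qed
    then show "p \<in> lift A - ?O" using p by (auto simp: lift_def)
  next
    fix p assume p: "p \<in> lift A - ?O"
    have "proj p \<notin> proj ` K"
    proof
      assume "proj p \<in> proj ` K"
      then obtain k n where "k \<in> K" "p = Tpow n k" by (metis imageE proj_eq_imp_Tpow)
      then show False using p K(3) by auto
    qed
    then show "p \<in> lift (A - proj ` K)" using p by (simp add: lift_def)
  qed
  have "open ?O" using K(4) by (auto simp: Tpow_image_translation intro!: open_translation)
  then have "compact (A - proj ` K)"
    using A by (intro compact_if_closed_lift)
      (auto simp: lift_rest intro: closed_Diff closed_lift compact_imp_closed
        bounded_subset[OF compact_imp_bounded])
  moreover have "compact (proj ` K)" using K(1) by (rule compact_continuous_image[OF continuous_on_proj])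
  moreover have "proj ` K \<subseteq> A" using K(3) by (auto simp: lift_def)
  ultimately show ?thesis
    using connected_closedD[OF A(1), of "proj ` K" "A - proj ` K"] K(2) compact_imp_closed by blast
qed

lemma annulus_eq: "annulus = sphere (0::complex) 1 \<times> UNIV"
  by (auto simp: annulus_def)

lemma closed_annulus: "closed annulus"
  by (simp add: annulus_eq closed_Times)

lemma connected_annulus: "connected annulus"
  unfolding annulus_eq by (intro connected_Times connected_sphere) auto

lemma openin_annulus_components:
  assumes "closed A" "W \<in> components (annulus - A)"
  shows "openin (top_of_set annulus) W"
proof -
  have open_rest: "openin (top_of_set annulus) (annulus - A)"
    unfolding Diff_eq using assms(1) by (intro openin_open_Int open_Compl)
  have "locally connected annulus"
    unfolding annulus_eq by (intro ANR_imp_locally_connected ANR_Times ANR_sphere ANR_UNIV)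
  then have "locally connected (annulus - A)" using open_rest by (rule locally_open_subset)
  then show ?thesis
    using open_rest assms(2) openin_components_locally_connected openin_trans by blast
qed

lemma band_subset_component:
  assumes "W \<in> components (annulus - A)" "w \<in> W" "snd w \<in> I" "connected I" "snd ` A \<inter> I = {}"
  shows "sphere 0 1 \<times> I \<subseteq> W"
proof (rule components_maximal[OF assms(1)])
  show "connected (sphere (0::complex) 1 \<times> I)"
    using assms(4) by (intro connected_Times connected_sphere) auto
  show "sphere 0 1 \<times> I \<subseteq> annulus - A" using assms(5) by (force simp: annulus_eq)
  have "w \<in> annulus" using assms(1,2) in_components_subset by blast
  then show "W \<inter> (sphere 0 1 \<times> I) \<noteq> {}" using assms(2,3) by (auto simp: annulus_eq mem_Times_iff)
qed

lemma essential_annular_continuum_components: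
  assumes "essential_annular_continuum A"
  shows "components (annulus - A) = {Uplus A, Uminus A}" "Uplus A \<noteq> Uminus A"
    and "annulus - A = Uplus A \<union> Uminus A"
proof -
  have "\<exists>U V. components (annulus - A) = {U, V} \<and> U \<noteq> V \<and>
      \<not> bdd_above (snd ` U) \<and> \<not> bdd_below (snd ` V)"
    using assms by (simp add: essential_annular_continuum_def)
  then obtain U V where UV: "components (annulus - A) = {U, V}" "U \<noteq> V"
      "\<not> bdd_above (snd ` U)" "\<not> bdd_below (snd ` V)"
    by (elim exE conjE) (rule that; assumption)
  have "compact A" using assms by (simp add: essential_annular_continuum_def)
  then obtain M where M: "\<And>a. a \<in> A \<Longrightarrow> \<bar>snd a\<bar> \<le> M" using compact_snd_bound by blast
  have comps: "U \<in> components (annulus - A)" "V \<in> components (annulus - A)" using UV(1) by auto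
  have disj: "U \<inter> V = {}" using components_nonoverlap[OF comps] UV(2) by blast
  obtain u where u: "u \<in> U" "M < snd u" using UV(3) by (meson bdd_above.I2 linorder_not_less)
  obtain v where v: "v \<in> V" "snd v < -M" using UV(4) by (meson bdd_below.I2 linorder_not_less)
  have "snd ` A \<inter> {M<..} = {}" "snd ` A \<inter> {..<-M} = {}" using M by (force simp: abs_le_iff)+
  then have top: "sphere 0 1 \<times> {M<..} \<subseteq> U" and bot: "sphere 0 1 \<times> {..<-M} \<subseteq> V"
    using band_subset_component[OF comps(1) u(1)] band_subset_component[OF comps(2) v(1)] u(2) v(2)
    by simp_all
  have "snd x \<le> M" if "x \<in> V" for x
  proof (rule ccontr)
    assume "\<not> snd x \<le> M"
    moreover have "x \<in> annulus" using that in_components_subset[OF comps(2)] by blast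
    ultimately have "x \<in> sphere 0 1 \<times> {M<..}" by (simp add: annulus_eq mem_Times_iff)
    then show False using that top disj by blast
  qed
  then have "bdd_above (snd ` V)" by (rule bdd_aboveI2)
  then have "Uplus A = U"
    unfolding Uplus_def using comps(1) UV(1,3) by (intro the_equality) auto
  have "-M \<le> snd x" if "x \<in> U" for x
  proof (rule ccontr)
    assume "\<not> -M \<le> snd x"
    moreover have "x \<in> annulus" using that in_components_subset[OF comps(1)] by blast
    ultimately have "x \<in> sphere 0 1 \<times> {..<-M}" by (simp add: annulus_eq mem_Times_iff)
    then show False using that bot disj by blast
  qed
  then have "bdd_below (snd ` U)" by (rule bdd_belowI2)
  then have "Uminus A = V"
    unfolding Uminus_def using comps(2) UV(1,4) by (intro the_equality) auto
  show comps_eq: "components (annulus - A) = {Uplus A, Uminus A}" "Uplus A \<noteq> Uminus A"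
    using UV \<open>Uplus A = U\<close> \<open>Uminus A = V\<close> by auto
  show "annulus - A = Uplus A \<union> Uminus A"
    using Union_components[of "annulus - A"] unfolding comps_eq(1) by simp
qed

lemma openin_Int_closure_empty:
  assumes "openin (top_of_set T) U" "V \<subseteq> T" "U \<inter> V = {}"
  shows "U \<inter> closure V = {}"
proof -
  obtain W where "open W" "U = T \<inter> W" using assms(1) by (auto simp: openin_open)
  then have "W \<inter> closure V = {}" using assms(2,3) open_Int_closure_eq_empty by blast
  then show ?thesis using \<open>U = T \<inter> W\<close> by blast
qed

lemma C_of_subset:
  assumes "essential_annular_continuum A"
  shows "C_of A \<subseteq> A"
proof
  fix p assume p: "p \<in> C_of A"
  note comps = essential_annular_continuum_components[OF assms]
  have "closed A" using assms by (simp add: essential_annular_continuum_def compact_imp_closed)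
  then have "openin (top_of_set annulus) (Uplus A)" "openin (top_of_set annulus) (Uminus A)"
    using openin_annulus_components comps(1) by auto
  moreover have sub: "Uplus A \<subseteq> annulus" "Uminus A \<subseteq> annulus"
    using comps(1) in_components_subset by blast+
  moreover have "Uplus A \<inter> Uminus A = {}"
    using components_nonoverlap comps by (metis insertCI)
  ultimately have "Uplus A \<inter> closure (Uminus A) = {}" "Uminus A \<inter> closure (Uplus A) = {}"
    using openin_Int_closure_empty by blast+
  moreover have p_cl: "p \<in> closure (Uplus A)" "p \<in> closure (Uminus A)"
    using p by (simp_all add: C_of_def)
  moreover have "p \<in> annulus" using p_cl(1) closure_minimal[OF sub(1) closed_annulus] by blast
  ultimately show "p \<in> A" using comps(3) by blast
qed

lemma C_of_nonempty:
  assumes "essential_annular_continuum A" "thin A"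
  shows "C_of A \<noteq> {}"
proof
  assume C: "C_of A = {}"
  note comps = essential_annular_continuum_components[OF assms(1)]
  let ?U = "closure (Uplus A)" and ?V = "closure (Uminus A)"
  have sub: "Uplus A \<subseteq> annulus - A" "Uminus A \<subseteq> annulus - A"
    using comps(1) in_components_subset by blast+
  have "openin (top_of_set annulus) (annulus - (?U \<union> ?V))"
    unfolding Diff_eq by (intro openin_open_Int open_Compl closed_Un closed_closure)
  moreover have "annulus - (?U \<union> ?V) \<subseteq> A"
    using comps(3) closure_subset by blast
  ultimately have "annulus \<subseteq> ?U \<union> ?V" using assms(2) unfolding thin_def by blast
  moreover have "?U \<inter> ?V \<inter> annulus = {}" using C by (simp add: C_of_def inf_commute)
  ultimately have "?U \<inter> annulus = {} \<or> ?V \<inter> annulus = {}"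
    by (intro connected_closedD[OF connected_annulus] closed_closure)
  moreover have "Uplus A \<noteq> {}" "Uminus A \<noteq> {}" using comps(1) in_components_nonempty by auto
  ultimately show False using sub closure_subset by blast
qed

lemma Tpow_components:
  assumes "S \<in> components Y" "\<And>m. Tpow m ` Y = Y"
  shows "Tpow n ` S \<in> components Y"
proof -
  have connected_Tpow: "connected (Tpow m ` X)" if "connected X" for m X
    using that unfolding Tpow_image_translation by (intro connected_continuous_image continuous_intros)
  have S: "S \<noteq> {}" "S \<subseteq> Y" "connected S"
    "\<And>D. D \<noteq> {} \<Longrightarrow> S \<subseteq> D \<Longrightarrow> D \<subseteq> Y \<Longrightarrow> connected D \<Longrightarrow> D = S"
    using assms(1) unfolding in_components_maximal by auto
  show ?thesis unfolding in_components_maximal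
  proof (intro conjI allI impI)
    show "Tpow n ` S \<noteq> {}" using S(1) by blast
    show "Tpow n ` S \<subseteq> Y" using S(2) assms(2)[of n] by blast
    show "connected (Tpow n ` S)" using S(3) by (rule connected_Tpow)
    fix D assume D: "D \<noteq> {} \<and> Tpow n ` S \<subseteq> D \<and> D \<subseteq> Y \<and> connected D"
    have "Tpow (-n) ` D = S"
    proof (rule S(4))
      have "Tpow (-n) ` Tpow n ` S \<subseteq> Tpow (-n) ` D" using D by (intro image_mono) auto
      then show "S \<subseteq> Tpow (-n) ` D" by (simp add: image_image)
      show "Tpow (-n) ` D \<subseteq> Y" using D assms(2)[of "-n"] by blast
      show "Tpow (-n) ` D \<noteq> {}" using D by blast
      show "connected (Tpow (-n) ` D)" using D connected_Tpow by blast
    qed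
    then have "Tpow n ` Tpow (-n) ` D = Tpow n ` S" by simp
    then show "D = Tpow n ` S" by (simp add: image_image)
  qed
qed

lemma component_closure_meets_lift:
  assumes A: "compact A" "connected A" "A \<subseteq> annulus"
    and C: "closed C" "C \<subseteq> A" "C \<noteq> {}"
    and S: "S \<in> components (lift A - lift C)"
    and width: "\<And>p q. p \<in> S \<Longrightarrow> q \<in> S \<Longrightarrow> fst p - fst q \<le> H"
  shows "closure S \<inter> lift C \<noteq> {}"
proof
  assume disj: "closure S \<inter> lift C = {}"
  let ?Y = "lift A - lift C"
  have closed_lifts: "closed (lift A)" "closed (lift C)"
    using A(1) C(1) by (simp_all add: closed_lift compact_imp_closed)
  have SY: "S \<subseteq> ?Y" "connected S" "S \<noteq> {}"
    using in_components_subset[OF S] in_components_connected[OF S] in_components_nonempty[OF S]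
    by auto
  have "closure S \<subseteq> ?Y" using disj closure_minimal[OF _ closed_lifts(1)] SY(1) by blast
  then have "closure S \<subseteq> S"
    using components_maximal[OF S connected_imp_connected_closure[OF SY(2)]] closure_subset SY(3)
    by blast
  then have "closed S" using closure_subset_eq by blast
  moreover have "bounded S"
  proof -
    obtain s0 where s0: "s0 \<in> S" using SY(3) by blast
    obtain M where M: "\<And>p. p \<in> lift A \<Longrightarrow> \<bar>snd p\<bar> \<le> M" using lift_snd_bound[OF A(1)] by blast
    have "S \<subseteq> {fst s0 - H..fst s0 + H} \<times> {-M..M}"
      using width[OF _ s0] width[OF s0] M SY(1) by (force simp: mem_Times_iff)
    then show ?thesis by (rule bounded_subset[OF compact_imp_bounded[OF compact_Times[OF compact_Icc compact_Icc]]])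
  qed
  moreover have "locally compact ?Y"
    unfolding Diff_eq using closed_lifts
    by (intro locally_compact_Int closed_imp_locally_compact open_imp_locally_compact) auto
  ultimately obtain K where K: "openin (top_of_set ?Y) K" "compact K" "S \<subseteq> K"
    using Sura_Bura_clopen_subset[OF _ S, of UNIV] by (auto simp: compact_eq_bounded_closed)
  then obtain W where W: "open W" "K = ?Y \<inter> W" by (auto simp: openin_open)
  then have "proj ` K = A"
    using SY(3) K by (intro proj_image_eq_if_openin_lift[OF A(2,1,3) K(2), of "W - lift C"])
      (auto intro: open_Diff closed_lifts(2))
  then obtain k where "k \<in> K" "proj k \<in> C" using C(2,3) by blast
  then show False using W(2) by (auto simp: lift_def)
qed

definition adjoin_components :: "'a::topological_space set \<Rightarrow> 'a set \<Rightarrow> 'a set" where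
  "adjoin_components G Y = G \<union> \<Union>{closure S | S. S \<in> components Y \<and> closure S \<inter> G \<noteq> {}}"

lemma connected_adjoin_components:
  assumes "connected G"
  shows "connected (adjoin_components G Y)"
  unfolding adjoin_components_def
proof (rule connected_Un_UN[OF assms])
  fix X assume "X \<in> {closure S | S. S \<in> components Y \<and> closure S \<inter> G \<noteq> {}}"
  then obtain S where S: "X = closure S" "S \<in> components Y" "closure S \<inter> G \<noteq> {}" by blast
  then show "connected X" using in_components_connected connected_imp_connected_closure by blast
  show "G \<inter> X \<noteq> {}" using S(1,3) by blast
qed

lemma adjoin_components_subset:
  assumes "closed L" "G \<subseteq> L" "Y \<subseteq> L"
  shows "adjoin_components G Y \<subseteq> L"
proof -
  have "closure S \<subseteq> L" if "S \<in> components Y" for S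
    using in_components_subset[OF that] assms(1,3) by (meson closure_minimal order_trans)
  then show ?thesis using assms(2) unfolding adjoin_components_def by blast
qed

lemma bounded_adjoin_components:
  fixes G Y :: "(real \<times> real) set"
  assumes "bounded G" "\<And>y. y \<in> Y \<Longrightarrow> \<bar>snd y\<bar> \<le> M"
    and width: "\<And>S p q. S \<in> components Y \<Longrightarrow> p \<in> S \<Longrightarrow> q \<in> S \<Longrightarrow> fst p - fst q \<le> H"
  shows "bounded (adjoin_components G Y)"
proof -
  obtain B where B: "\<And>g. g \<in> G \<Longrightarrow> \<bar>fst g\<bar> \<le> B"
    using assms(1) unfolding bounded_iff by (metis norm_fst_le order_trans prod.collapse real_norm_def)
  define Box where "Box = {-B-H..B+H} \<times> {-M..M}"
  have box: "closure S \<subseteq> Box" if S: "S \<in> components Y" and g: "g \<in> closure S" "g \<in> G" for S g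
  proof -
    have "S \<subseteq> {fst p - H..fst p + H} \<times> UNIV" if "p \<in> S" for p
      using width[OF S _ that] width[OF S that] by (force simp: mem_Times_iff)
    then have strip: "closure S \<subseteq> {fst p - H..fst p + H} \<times> UNIV" if "p \<in> S" for p
      using that by (simp add: closed_Times closure_minimal)
    have "fst p - H \<le> fst g \<and> fst g \<le> fst p + H" if "p \<in> S" for p
      using strip[OF that] g(1) by (auto simp: mem_Times_iff)
    then have "S \<subseteq> Box"
      using B[OF g(2)] assms(2) in_components_subset[OF S] by (force simp: Box_def mem_Times_iff)
    then show ?thesis by (simp add: Box_def closed_Times closure_minimal)
  qed
  have "\<Union>{closure S | S. S \<in> components Y \<and> closure S \<inter> G \<noteq> {}} \<subseteq> Box"
  proof (rule Union_least)
    fix X assume "X \<in> {closure S | S. S \<in> components Y \<and> closure S \<inter> G \<noteq> {}}"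
    then obtain S where "X = closure S" "S \<in> components Y" "closure S \<inter> G \<noteq> {}" by blast
    then show "X \<subseteq> Box" using box by blast
  qed
  then have "adjoin_components G Y \<subseteq> G \<union> Box" unfolding adjoin_components_def by blast
  moreover have "bounded (G \<union> Box)" using assms(1) by (simp add: Box_def bounded_Times)
  ultimately show ?thesis by (rule bounded_subset[rotated])
qed

lemma Tpow_adjoin_components_cover:
  assumes Y: "\<And>m. Tpow m ` Y = Y"
    and meets: "\<And>S. S \<in> components Y \<Longrightarrow> closure S \<inter> (\<Union>n. Tpow n ` G) \<noteq> {}"
  shows "Y \<subseteq> (\<Union>n. Tpow n ` adjoin_components G Y)"
proof
  fix p assume p: "p \<in> Y"
  define S where "S = connected_component_set Y p"
  have S: "S \<in> components Y" unfolding S_def using p by (rule componentsI)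
  have "p \<in> S" using p by (simp add: S_def)
  obtain q where "q \<in> closure S" "q \<in> (\<Union>n. Tpow n ` G)" using meets[OF S] by blast
  then obtain n g where g: "g \<in> G" "Tpow n g \<in> closure S" by blast
  let ?S = "Tpow (-n) ` S"
  have "g \<in> Tpow (-n) ` closure S" by (rule rev_image_eqI[OF g(2)]) simp
  moreover have "closure ?S = Tpow (-n) ` closure S"
    unfolding Tpow_image_translation by (rule closure_translation)
  ultimately have "g \<in> closure ?S" by (simp only:)
  then have "closure ?S \<inter> G \<noteq> {}" using g(1) by blast
  then have "closure ?S \<in> {closure S | S. S \<in> components Y \<and> closure S \<inter> G \<noteq> {}}"
    using Tpow_components[OF S Y, of "-n"] by (intro CollectI exI[of _ ?S] conjI refl)
  then have "closure ?S \<subseteq> adjoin_components G Y"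
    unfolding adjoin_components_def by (rule le_supI2[OF Union_upper])
  moreover have "Tpow (-n) p \<in> closure ?S"
    using \<open>p \<in> S\<close> by (intro subsetD[OF closure_subset] imageI)
  ultimately have "Tpow n (Tpow (-n) p) \<in> Tpow n ` adjoin_components G Y" by (rule imageI[OF subsetD])
  then have "p \<in> Tpow n ` adjoin_components G Y" by simp
  then show "p \<in> (\<Union>n. Tpow n ` adjoin_components G Y)" by (rule UN_I[OF UNIV_I])
qed

lemma lift_generated_by_adjoin_components:
  assumes A: "compact A" "C \<subseteq> A"
    and G: "compact G" "connected G" "G \<subseteq> lift C" "(\<Union>n. Tpow n ` G) = lift C"
    and width: "\<And>S p q. S \<in> components (lift A - lift C) \<Longrightarrow> p \<in> S \<Longrightarrow> q \<in> S \<Longrightarrow>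
      fst p - fst q \<le> H"
    and meets: "\<And>S. S \<in> components (lift A - lift C) \<Longrightarrow> closure S \<inter> lift C \<noteq> {}"
  obtains G0 where "compact G0" "connected G0" "G0 \<subseteq> lift A" "(\<Union>n. Tpow n ` G0) = lift A"
proof -
  let ?Y = "lift A - lift C"
  define G0 where "G0 = closure (adjoin_components G ?Y)"
  obtain M where M: "\<And>p. p \<in> lift A \<Longrightarrow> \<bar>snd p\<bar> \<le> M" using lift_snd_bound[OF A(1)] by blast
  have adjoin_G0: "adjoin_components G ?Y \<subseteq> G0" unfolding G0_def by (rule closure_subset)
  then have "G \<subseteq> G0" unfolding adjoin_components_def by blast
  have "closed (lift A)" using A(1) by (simp add: closed_lift compact_imp_closed)
  moreover have "G \<subseteq> lift A" using G(3) A(2) by (auto simp: lift_def)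
  ultimately have G0_lift: "G0 \<subseteq> lift A"
    unfolding G0_def by (meson Diff_subset adjoin_components_subset closure_minimal)
  have "compact G0" unfolding G0_def compact_closure
    using M by (intro bounded_adjoin_components[OF compact_imp_bounded[OF G(1)] _ width]) auto
  have "connected G0"
    unfolding G0_def by (intro connected_imp_connected_closure connected_adjoin_components G(2))
  have "?Y \<subseteq> (\<Union>n. Tpow n ` adjoin_components G ?Y)"
  proof (rule Tpow_adjoin_components_cover)
    show "Tpow m ` ?Y = ?Y" for m using Tpow_lift[of m "A - C"] by (simp add: lift_def vimage_Diff)
    show "closure S \<inter> (\<Union>n. Tpow n ` G) \<noteq> {}" if "S \<in> components ?Y" for S
      using meets[OF that] G(4) by simp
  qed
  also have "\<dots> \<subseteq> (\<Union>n. Tpow n ` G0)"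
    using adjoin_G0 by (intro UN_mono image_mono order_refl)
  finally have "?Y \<subseteq> (\<Union>n. Tpow n ` G0)" .
  moreover have "lift C \<subseteq> (\<Union>n. Tpow n ` G0)"
    unfolding G(4)[symmetric] using \<open>G \<subseteq> G0\<close> by (intro UN_mono image_mono order_refl)
  ultimately have "?Y \<union> lift C \<subseteq> (\<Union>n. Tpow n ` G0)" by (rule Un_least)
  then have "lift A \<subseteq> (\<Union>n. Tpow n ` G0)" by (rule subset_trans[rotated]) blast
  moreover have "(\<Union>n. Tpow n ` G0) \<subseteq> lift A"
  proof (rule UN_least)
    show "Tpow n ` G0 \<subseteq> lift A" for n using image_mono[OF G0_lift, of "Tpow n"] by simp
  qed
  ultimately have "lift A = (\<Union>n. Tpow n ` G0)" by (rule equalityI)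
  from this[symmetric] show thesis by (rule that[OF \<open>compact G0\<close> \<open>connected G0\<close> G0_lift])
qed

lemma spike_width_le:
  assumes "H_spikes A \<le> ereal H" "S \<in> spikes A" "p \<in> S" "q \<in> S"
  shows "fst p - fst q \<le> H"
proof -
  have "ereal (fst p - fst q) \<le> hwidth S"
    unfolding hwidth_def by (rule SUP_upper2[OF assms(3)], rule SUP_upper[OF assms(4)])
  also have "\<dots> \<le> H_spikes A" unfolding H_spikes_def using assms(2) by (rule SUP_upper)
  finally have "ereal (fst p - fst q) \<le> ereal H" using assms(1) by (rule order_trans)
  then show ?thesis by simp
qed

theorem mainTheorem16:
  assumes "essential_annular_continuum A"
    and "thin A"
    and "compactly_generated (C_of A)"
    and "H_spikes A < \<infinity>"
  shows "compactly_generated A"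
proof -
  have A: "A \<subseteq> annulus" "compact A" "connected A"
    using assms(1) unfolding essential_annular_continuum_def by auto
  let ?C = "C_of A"
  have C: "closed ?C" "?C \<subseteq> A" "?C \<noteq> {}"
    using C_of_subset[OF assms(1)] C_of_nonempty[OF assms(1,2)] by (auto simp: C_of_def)
  obtain G where G: "compact G" "connected G" "G \<subseteq> lift ?C" "(\<Union>n. Tpow n ` G) = lift ?C"
    using assms(3) unfolding compactly_generated_def by blast
  obtain H where H: "H_spikes A \<le> ereal H" using assms(4) by (cases "H_spikes A") auto
  have width: "fst p - fst q \<le> H" if "S \<in> components (lift A - lift ?C)" "p \<in> S" "q \<in> S" for S p q
    using spike_width_le[OF H _ that(2,3)] that(1) unfolding spikes_def by blast
  have meets: "closure S \<inter> lift ?C \<noteq> {}" if "S \<in> components (lift A - lift ?C)" for S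
    using component_closure_meets_lift[OF A(2,3,1) C that width[OF that]] .
  obtain G0 where "compact G0" "connected G0" "G0 \<subseteq> lift A" "(\<Union>n. Tpow n ` G0) = lift A"
    by (rule lift_generated_by_adjoin_components[OF A(2) C(2) G width meets])
  then show ?thesis
    unfolding compactly_generated_def using A compact_imp_closed by blast
qed

end
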